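(* For $p\in\{1,2\}$ let $\mathcal F_p=\{x\mapsto\langle w,x\rangle: w\in\mathbb R^d,\ \|w\|_p\le1\}$. Let $\mathcal D_S$ be a distribution on $\mathbb R^d\times\mathbb R$ with $\|x\|_\infty\le1$, $|y|\le1$ a.s., $|f(x)|\le 1$ for all $f\in\mathcal F_p$ and $x$ in the support, and $y=f_S^*(x)+\eta$ with $f_S^*\in\mathcal F_p$, $\mathbb E[\eta\mid x]=0$, $\mathbb E[\eta^2\mid x]=\sigma^2$. Let $S$ be $m$ i.i.d. samples from $\mathcal D_S$ and $f_S\in\arg\min_{f\in\mathcal F_p}\frac1m\sum_{(x,y)\in S}(f(x)-y)^2$. Then for $\delta\in(0,1)$, with probability at least $1-\delta$, $$\Big|\sigma^2-\frac1m\sum_{(x,y)\in S}(f_S(x)-y)^2\Big|\le\begin{cases}8\sqrt{\frac{2\log(2d)}{m}}+12\sqrt{\frac{\log(4/\delta)}{2m}}, & p=1\ (\text{Lasso}),\\[2pt] 8\sqrt{\frac dm}+12\sqrt{\frac{\log(4/\delta)}{2m}}, & p=2\ (\text{Ridge}).\end{cases}$$ *)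

theory Defs
  imports "HOL-Probability.Probability"
begin

definition norm1 :: "real^'d \<Rightarrow> real" where
  "norm1 w = (\<Sum>i\<in>UNIV. \<bar>w $ i\<bar>)"

definition pnorm :: "nat \<Rightarrow> real^'d \<Rightarrow> real" where
  "pnorm p w = (if p = 1 then norm1 w else norm w)"

definition emp_risk :: "nat \<Rightarrow> (nat \<Rightarrow> (real^'d) \<times> real) \<Rightarrow> real^'d \<Rightarrow> real" where
  "emp_risk m S w = (1 / real m) * (\<Sum>i<m. (w \<bullet> fst (S i) - snd (S i))^2)"

definition is_erm :: "nat \<Rightarrow> nat \<Rightarrow> (nat \<Rightarrow> (real^'d) \<times> real) \<Rightarrow> real^'d \<Rightarrow> bool" where
  "is_erm p m S w \<longleftrightarrow> pnorm p w \<le> 1 \<and>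
     (\<forall>v. pnorm p v \<le> 1 \<longrightarrow> emp_risk m S w \<le> emp_risk m S v)"

end

(* Write eta = y - <wstar, x> for the noise. Expanding the square around wstar, the population
   risk is E (<w, x> - y)^2 = E <w - wstar, x>^2 + sigma^2: the cross term E[<w - wstar, x> eta]
   vanishes by E[eta | x] = 0, and E[eta^2] = sigma^2 by the tower property. So sigma^2 is the
   least risk over F_p, attained at wstar, and for an empirical risk minimiser w_S
     emp(w_S) <= emp(wstar) <= sigma^2 + R   and   emp(w_S) >= risk(w_S) - R >= sigma^2 - R
   as soon as the empirical and the population risk are uniformly R-close on F_p.

   Expanding the square once more, emp(w) - risk(w) is a linear combination, with coefficients
   w_j w_k, -2 w_j and 1, of the sample deviations of the d^2 + d + 1 monomials x_j x_k, x_j y,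
   y^2. On the l1 ball the coefficients have total mass (|w|_1 + 1)^2 <= 4, so Hoeffding's
   inequality and a union bound over the monomials give the Lasso rate. On the l2 ball the
   coefficient vector has Euclidean norm at most sqrt 6, and the Euclidean norm of the vector of
   deviations has mean at most sqrt (3/m) (a variance computation) and bounded differences, so it
   concentrates by McDiarmid's inequality, proved by the usual martingale argument from
   Hoeffding's lemma.

   The monomials are evaluated on data clipped to the region where the data lie almost surely:
   this changes nothing almost surely, but makes the bounded-difference hypotheses of the
   concentration inequalities hold everywhere. *)

theory Submission
  imports Defs
begin

lemma integrable_bounded_prob:
  fixes f :: "'a \<Rightarrow> real"
  assumes "prob_space M" "f \<in> borel_measurable M" "\<And>z. z \<in> space M \<Longrightarrow> \<bar>f z\<bar> \<le> B"
  shows "integrable M f"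
proof -
  interpret prob_space M by fact
  show ?thesis by (intro integrable_const_bound[where B=B] AE_I2) (use assms in auto)
qed

section \<open>McDiarmid's inequality\<close>

lemma (in prob_space) Hoeffdings_lemma_oscillation:
  fixes f :: "'a \<Rightarrow> real"
  assumes [measurable]: "f \<in> borel_measurable M" and l: "l > 0"
    and osc: "\<And>x y. x \<in> space M \<Longrightarrow> y \<in> space M \<Longrightarrow> f x - f y \<le> c"
  shows "(\<integral>\<^sup>+x. ennreal (exp (l * (f x - expectation f))) \<partial>M) \<le> ennreal (exp (l\<^sup>2 * c\<^sup>2 / 8))"
proof -
  define a where "a = Inf (f ` space M)"
  obtain y0 where y0: "y0 \<in> space M" using not_empty by blast
  have "bdd_below (f ` space M)"
    using osc[OF y0] by (intro bdd_belowI[of _ "f y0 - c"]) force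
  then have "f x \<in> {a..a + c}" if x: "x \<in> space M" for x
  proof -
    have "a \<le> f x" unfolding a_def using x \<open>bdd_below _\<close> by (intro cInf_lower) auto
    moreover have "f x - c \<le> a" unfolding a_def using x osc by (intro cInf_greatest) force+
    ultimately show ?thesis by simp
  qed
  then interpret interval_bounded_random_variable M f a "a + c"
    by unfold_locales (auto intro: AE_I2)
  show ?thesis
    using Hoeffdings_lemma_nn_integral[OF l] by simp
qed

lemma fun_upd_in_space_PiM_lessThan_Suc:
  "x \<in> space (PiM {..<n} (\<lambda>_. M)) \<Longrightarrow> y \<in> space M \<Longrightarrow> x(n:=y) \<in> space (PiM {..<Suc n} (\<lambda>_. M))"
  unfolding space_PiM lessThan_Suc by (rule PiE_fun_upd)

lemma measurable_fun_upd_last: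
  assumes [measurable]: "f \<in> borel_measurable (PiM {..<Suc n} (\<lambda>_. M))"
    and x: "x \<in> space (PiM {..<n} (\<lambda>_. M))"
  shows "(\<lambda>y. f (x(n:=y))) \<in> borel_measurable M"
proof -
  have "(\<lambda>(x, y). f (x(n:=y))) \<in> borel_measurable (PiM {..<n} (\<lambda>_. M) \<Otimes>\<^sub>M M)"
    by (measurable, simp add: lessThan_Suc)
  then show ?thesis using x by measurable
qed

lemma bounded_differences_integral_last:
  fixes f :: "(nat \<Rightarrow> 'a) \<Rightarrow> real"
  assumes M: "prob_space M"
    and f[measurable]: "f \<in> borel_measurable (PiM {..<Suc n} (\<lambda>_. M))"
    and fB: "\<And>x. x \<in> space (PiM {..<Suc n} (\<lambda>_. M)) \<Longrightarrow> \<bar>f x\<bar> \<le> B"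
    and fd: "\<And>x i y. x \<in> space (PiM {..<Suc n} (\<lambda>_. M)) \<Longrightarrow> i < Suc n \<Longrightarrow> y \<in> space M \<Longrightarrow>
               \<bar>f x - f (x(i:=y))\<bar> \<le> c"
  defines "g \<equiv> \<lambda>x. \<integral>y. f (x(n:=y)) \<partial>M"
  shows "g \<in> borel_measurable (PiM {..<n} (\<lambda>_. M))"
    and "\<And>x. x \<in> space (PiM {..<n} (\<lambda>_. M)) \<Longrightarrow> \<bar>g x\<bar> \<le> B"
    and "\<And>x i z. x \<in> space (PiM {..<n} (\<lambda>_. M)) \<Longrightarrow> i < n \<Longrightarrow> z \<in> space M \<Longrightarrow>
               \<bar>g x - g (x(i:=z))\<bar> \<le> c"
proof -
  interpret M: prob_space M by (rule M)
  note upd = fun_upd_in_space_PiM_lessThan_Suc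
  have slice: "integrable M (\<lambda>y. f (x(n:=y)))" if "x \<in> space (PiM {..<n} (\<lambda>_. M))" for x
    using that by (intro integrable_bounded_prob[OF M measurable_fun_upd_last[OF f], where B=B] fB upd)
  show "g \<in> borel_measurable (PiM {..<n} (\<lambda>_. M))"
    unfolding g_def by (measurable, simp add: lessThan_Suc)
  show "\<bar>g x\<bar> \<le> B" if x: "x \<in> space (PiM {..<n} (\<lambda>_. M))" for x
    unfolding g_def
    using x slice by (intro order_trans[OF integral_abs_bound] M.integral_le_const AE_I2) (auto intro!: fB upd)
  show "\<bar>g x - g (x(i:=z))\<bar> \<le> c"
    if x: "x \<in> space (PiM {..<n} (\<lambda>_. M))" and i: "i < n" and z: "z \<in> space M" for x i z
  proof -
    have xz: "x(i:=z) \<in> space (PiM {..<n} (\<lambda>_. M))"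
      using x z i unfolding space_PiM by (auto simp: PiE_iff extensional_def)
    have swap: "(x(i:=z))(n:=y) = (x(n:=y))(i:=z)" for y
      using i by (auto simp: fun_eq_iff)
    have "g x - g (x(i:=z)) = (\<integral>y. f (x(n:=y)) - f ((x(n:=y))(i:=z)) \<partial>M)"
      unfolding g_def swap[symmetric] using slice[OF x] slice[OF xz] by simp
    also have "\<bar>\<dots>\<bar> \<le> c"
      using slice[OF x] slice[OF xz] upd[OF x] i z unfolding swap[symmetric]
      by (intro order_trans[OF integral_abs_bound] M.integral_le_const AE_I2)
         (auto simp: swap intro!: fd)
    finally show ?thesis .
  qed
qed

lemma nn_integral_exp_fun_upd_last_le:
  fixes f :: "(nat \<Rightarrow> 'a) \<Rightarrow> real"
  assumes M: "prob_space M" and l: "l > 0"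
    and f: "f \<in> borel_measurable (PiM {..<Suc n} (\<lambda>_. M))"
    and fd: "\<And>x y. x \<in> space (PiM {..<Suc n} (\<lambda>_. M)) \<Longrightarrow> y \<in> space M \<Longrightarrow>
               \<bar>f x - f (x(n:=y))\<bar> \<le> c"
    and x: "x \<in> space (PiM {..<n} (\<lambda>_. M))"
  shows "(\<integral>\<^sup>+y. ennreal (exp (l * (f (x(n:=y)) - E))) \<partial>M)
           \<le> ennreal (exp (l * ((\<integral>y. f (x(n:=y)) \<partial>M) - E))) * ennreal (exp (l\<^sup>2 * c\<^sup>2 / 8))"
proof -
  interpret M: prob_space M by (rule M)
  define g where "g = (\<integral>y. f (x(n:=y)) \<partial>M)"
  have slice[measurable]: "(\<lambda>y. f (x(n:=y))) \<in> borel_measurable M"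
    by (rule measurable_fun_upd_last[OF f x])
  have "(\<integral>\<^sup>+y. ennreal (exp (l * (f (x(n:=y)) - E))) \<partial>M)
      = (\<integral>\<^sup>+y. ennreal (exp (l * (g - E))) * ennreal (exp (l * (f (x(n:=y)) - g))) \<partial>M)"
    by (intro nn_integral_cong) (simp add: ennreal_mult[symmetric] mult_exp_exp algebra_simps)
  also have "\<dots> = ennreal (exp (l * (g - E))) * (\<integral>\<^sup>+y. ennreal (exp (l * (f (x(n:=y)) - g))) \<partial>M)"
    by (rule nn_integral_cmult) auto
  also have "\<dots> \<le> ennreal (exp (l * (g - E))) * ennreal (exp (l\<^sup>2 * c\<^sup>2 / 8))"
    unfolding g_def
  proof (intro mult_left_mono M.Hoeffdings_lemma_oscillation[OF slice l])
    fix y y' assume "y \<in> space M" "y' \<in> space M"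
    then have "\<bar>f (x(n:=y)) - f ((x(n:=y))(n:=y'))\<bar> \<le> c"
      using x by (intro fd fun_upd_in_space_PiM_lessThan_Suc)
    then show "f (x(n:=y)) - f (x(n:=y')) \<le> c" by simp
  qed simp
  finally show ?thesis unfolding g_def .
qed

lemma bounded_differences_mgf_le:
  fixes f :: "(nat \<Rightarrow> 'a) \<Rightarrow> real"
  assumes M: "prob_space M" and l: "l > 0"
    and "f \<in> borel_measurable (PiM {..<n} (\<lambda>_. M))"
    and "\<And>x. x \<in> space (PiM {..<n} (\<lambda>_. M)) \<Longrightarrow> \<bar>f x\<bar> \<le> B"
    and "\<And>x i y. x \<in> space (PiM {..<n} (\<lambda>_. M)) \<Longrightarrow> i < n \<Longrightarrow> y \<in> space M \<Longrightarrow>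
           \<bar>f x - f (x(i:=y))\<bar> \<le> c"
  shows "(\<integral>\<^sup>+x. ennreal (exp (l * (f x - (\<integral>x. f x \<partial>PiM {..<n} (\<lambda>_. M))))) \<partial>PiM {..<n} (\<lambda>_. M))
           \<le> ennreal (exp (l\<^sup>2 * real n * c\<^sup>2 / 8))"
  using assms(3-5)
proof (induction n arbitrary: f)
  case 0
  then show ?case
    by (simp add: PiM_empty nn_integral_count_space_finite lebesgue_integral_count_space_finite)
next
  case (Suc n f)
  interpret M: prob_space M by (rule M)
  interpret P: product_prob_space "\<lambda>_. M" by unfold_locales
  define Q where "Q = PiM {..<n} (\<lambda>_. M)"
  interpret Q: prob_space Q unfolding Q_def by (intro prob_space_PiM M)
  define g where "g x = (\<integral>y. f (x(n:=y)) \<partial>M)" for x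
  note g = bounded_differences_integral_last[OF M Suc.prems, folded g_def Q_def]
  have PS: "PiM {..<Suc n} (\<lambda>_. M) = PiM (insert n {..<n}) (\<lambda>_. M)"
    by (simp add: lessThan_Suc)
  have [measurable]: "f \<in> borel_measurable (PiM (insert n {..<n}) (\<lambda>_. M))"
    using Suc.prems(1) PS by simp
  have "integrable (PiM (insert n {..<n}) (\<lambda>_. M)) f"
    using Suc.prems(2) PS by (intro integrable_bounded_prob[OF prob_space_PiM[OF M]]) auto
  then have Ef: "(\<integral>x. f x \<partial>PiM {..<Suc n} (\<lambda>_. M)) = (\<integral>x. g x \<partial>Q)"
    unfolding PS g_def Q_def by (intro P.product_integral_insert) auto
  define E where "E = (\<integral>x. g x \<partial>Q)"
  have "(\<integral>\<^sup>+x. ennreal (exp (l * (f x - (\<integral>x. f x \<partial>PiM {..<Suc n} (\<lambda>_. M))))) \<partial>PiM {..<Suc n} (\<lambda>_. M))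
      = (\<integral>\<^sup>+x. (\<integral>\<^sup>+y. ennreal (exp (l * (f (x(n:=y)) - E))) \<partial>M) \<partial>Q)"
    unfolding Ef E_def[symmetric] unfolding PS Q_def by (rule P.product_nn_integral_insert) auto
  also have "\<dots> \<le> (\<integral>\<^sup>+x. ennreal (exp (l * (g x - E))) * ennreal (exp (l\<^sup>2 * c\<^sup>2 / 8)) \<partial>Q)"
    unfolding g_def Q_def
    using Suc.prems(3) fun_upd_in_space_PiM_lessThan_Suc
    by (intro nn_integral_mono nn_integral_exp_fun_upd_last_le[OF M l Suc.prems(1)]) auto
  also have "\<dots> = (\<integral>\<^sup>+x. ennreal (exp (l * (g x - E))) \<partial>Q) * ennreal (exp (l\<^sup>2 * c\<^sup>2 / 8))"
    using g(1) by (intro nn_integral_multc) auto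
  also have "\<dots> \<le> ennreal (exp (l\<^sup>2 * real n * c\<^sup>2 / 8)) * ennreal (exp (l\<^sup>2 * c\<^sup>2 / 8))"
    using Suc.IH[OF g[unfolded Q_def]] unfolding E_def Q_def by (intro mult_right_mono) auto
  also have "\<dots> = ennreal (exp (l\<^sup>2 * real (Suc n) * c\<^sup>2 / 8))"
    by (simp add: ennreal_mult[symmetric] mult_exp_exp distrib_left distrib_right add_divide_distrib)
  finally show ?case .
qed

lemma McDiarmid_ineq_ge:
  fixes f :: "(nat \<Rightarrow> 'a) \<Rightarrow> real"
  assumes M: "prob_space M" and n: "n > 0" and c: "c > 0" and t: "t \<ge> 0"
    and f: "f \<in> borel_measurable (PiM {..<n} (\<lambda>_. M))"
    and fB: "\<And>x. x \<in> space (PiM {..<n} (\<lambda>_. M)) \<Longrightarrow> \<bar>f x\<bar> \<le> B"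
    and fd: "\<And>x i y. x \<in> space (PiM {..<n} (\<lambda>_. M)) \<Longrightarrow> i < n \<Longrightarrow> y \<in> space M \<Longrightarrow>
               \<bar>f x - f (x(i:=y))\<bar> \<le> c"
  shows "measure (PiM {..<n} (\<lambda>_. M))
           {x \<in> space (PiM {..<n} (\<lambda>_. M)). f x \<ge> (\<integral>x. f x \<partial>PiM {..<n} (\<lambda>_. M)) + t}
           \<le> exp (- 2 * t\<^sup>2 / (real n * c\<^sup>2))"
proof (cases "t = 0")
  case True
  interpret P: prob_space "PiM {..<n} (\<lambda>_. M)" by (intro prob_space_PiM M)
  show ?thesis using True by simp
next
  case False
  define P where "P = PiM {..<n} (\<lambda>_. M)"
  interpret P: prob_space P unfolding P_def by (intro prob_space_PiM M)
  define E where "E = (\<integral>x. f x \<partial>P)"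
  define l where "l = 4 * t / (real n * c\<^sup>2)"
  have l: "l > 0" unfolding l_def using False t n c by simp
  have "emeasure P {x \<in> space P. f x - E \<ge> t}
      \<le> ennreal (exp (-l * t)) * (\<integral>\<^sup>+x. ennreal (exp (l * (f x - E))) * indicator (space P) x \<partial>P)"
    using f unfolding P_def by (intro Chernoff_ineq_nn_integral_ge l) auto
  also have "(\<integral>\<^sup>+x. ennreal (exp (l * (f x - E))) * indicator (space P) x \<partial>P)
      = (\<integral>\<^sup>+x. ennreal (exp (l * (f x - E))) \<partial>P)"
    by (intro nn_integral_cong) auto
  also have "\<dots> \<le> ennreal (exp (l\<^sup>2 * real n * c\<^sup>2 / 8))"
    unfolding E_def P_def by (rule bounded_differences_mgf_le[OF M l f fB fd])
  also have "ennreal (exp (-l * t)) * ennreal (exp (l\<^sup>2 * real n * c\<^sup>2 / 8))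
      = ennreal (exp (- 2 * t\<^sup>2 / (real n * c\<^sup>2)))"
  proof -
    \<comment> \<open>\<open>l\<close> minimises \<open>l\<^sup>2 n c\<^sup>2 / 8 - l t\<close>.\<close>
    have "-l * t + l\<^sup>2 * real n * c\<^sup>2 / 8 = - 2 * t\<^sup>2 / (real n * c\<^sup>2)"
      unfolding l_def using n c by (simp add: field_simps power2_eq_square)
    then show ?thesis by (simp add: ennreal_mult[symmetric] mult_exp_exp)
  qed
  finally have "P.prob {x \<in> space P. f x - E \<ge> t} \<le> exp (- 2 * t\<^sup>2 / (real n * c\<^sup>2))"
    by (simp add: mult_left_mono P.emeasure_eq_measure)
  moreover have "{x \<in> space P. f x - E \<ge> t} = {x \<in> space P. f x \<ge> E + t}" by auto
  ultimately show ?thesis unfolding P_def E_def by simp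
qed

lemma McDiarmid_ineq_abs:
  fixes f :: "(nat \<Rightarrow> 'a) \<Rightarrow> real"
  assumes M: "prob_space M" and n: "n > 0" and c: "c > 0" and t: "t \<ge> 0"
    and f: "f \<in> borel_measurable (PiM {..<n} (\<lambda>_. M))"
    and fB: "\<And>x. x \<in> space (PiM {..<n} (\<lambda>_. M)) \<Longrightarrow> \<bar>f x\<bar> \<le> B"
    and fd: "\<And>x i y. x \<in> space (PiM {..<n} (\<lambda>_. M)) \<Longrightarrow> i < n \<Longrightarrow> y \<in> space M \<Longrightarrow>
               \<bar>f x - f (x(i:=y))\<bar> \<le> c"
  shows "measure (PiM {..<n} (\<lambda>_. M))
           {x \<in> space (PiM {..<n} (\<lambda>_. M)). \<bar>f x - (\<integral>x. f x \<partial>PiM {..<n} (\<lambda>_. M))\<bar> \<ge> t}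
           \<le> 2 * exp (- 2 * t\<^sup>2 / (real n * c\<^sup>2))"
proof -
  define P where "P = PiM {..<n} (\<lambda>_. M)"
  interpret P: prob_space P unfolding P_def by (intro prob_space_PiM M)
  define E where "E = (\<integral>x. f x \<partial>P)"
  have upper: "P.prob {x \<in> space P. f x \<ge> E + t} \<le> exp (- 2 * t\<^sup>2 / (real n * c\<^sup>2))"
    unfolding P_def E_def by (rule McDiarmid_ineq_ge[OF M n c t f fB fd])
  have lower: "P.prob {x \<in> space P. - f x \<ge> (\<integral>x. - f x \<partial>P) + t} \<le> exp (- 2 * t\<^sup>2 / (real n * c\<^sup>2))"
    unfolding P_def
    by (rule McDiarmid_ineq_ge[OF M n c t]) (use f fB fd in \<open>auto simp: abs_minus_commute\<close>)
  have "{x \<in> space P. \<bar>f x - E\<bar> \<ge> t}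
      = {x \<in> space P. f x \<ge> E + t} \<union> {x \<in> space P. - f x \<ge> (\<integral>x. - f x \<partial>P) + t}"
    by (auto simp: E_def)
  also have "P.prob \<dots> \<le> P.prob {x \<in> space P. f x \<ge> E + t} + P.prob {x \<in> space P. - f x \<ge> (\<integral>x. - f x \<partial>P) + t}"
    using f unfolding P_def by (intro measure_Un_le) auto
  finally show ?thesis using upper lower unfolding P_def E_def by simp
qed

section \<open>Deviations of sample means\<close>

definition sample_dev :: "'a measure \<Rightarrow> nat \<Rightarrow> ('a \<Rightarrow> real) \<Rightarrow> (nat \<Rightarrow> 'a) \<Rightarrow> real" where
  "sample_dev M n f S = (\<Sum>i<n. f (S i)) / real n - (\<integral>z. f z \<partial>M)"

lemma sample_dev_measurable[measurable]:
  assumes [measurable]: "f \<in> borel_measurable M"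
  shows "sample_dev M n f \<in> borel_measurable (PiM {..<n} (\<lambda>_. M))"
  unfolding sample_dev_def by measurable

lemma sample_dev_cmult: "sample_dev M n (\<lambda>z. c * f z) S = c * sample_dev M n f S"
  unfolding sample_dev_def by (simp add: sum_distrib_left[symmetric] right_diff_distrib)

lemma sample_dev_sum:
  "finite A \<Longrightarrow> (\<And>a. a \<in> A \<Longrightarrow> integrable M (f a)) \<Longrightarrow>
     sample_dev M n (\<lambda>z. \<Sum>a\<in>A. f a z) S = (\<Sum>a\<in>A. sample_dev M n (f a) S)"
  unfolding sample_dev_def
  by (simp add: sum.swap[where A = A and B = "{..<n}"] sum_subtractf sum_divide_distrib)

lemma sample_dev_lincomb:
  assumes "finite A" "\<And>a. a \<in> A \<Longrightarrow> integrable M (f a)"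
  shows "sample_dev M n (\<lambda>z. \<Sum>a\<in>A. c a * f a z) S = (\<Sum>a\<in>A. c a * sample_dev M n (f a) S)"
  using assms by (simp add: sample_dev_sum sample_dev_cmult)

lemma sample_dev_fun_upd:
  assumes "i < n"
  shows "sample_dev M n f (S(i:=y)) = sample_dev M n f S + (f y - f (S i)) / real n"
proof -
  have "(\<Sum>j<n. f ((S(i:=y)) j)) = f y + (\<Sum>j\<in>{..<n} - {i}. f (S j))"
    using assms by (subst sum.remove[of _ i]) auto
  moreover have "(\<Sum>j<n. f (S j)) = f (S i) + (\<Sum>j\<in>{..<n} - {i}. f (S j))"
    using assms by (subst sum.remove[of _ i]) auto
  ultimately show ?thesis
    unfolding sample_dev_def by (simp add: add_divide_distrib diff_divide_distrib)
qed

lemma abs_sum_components_le: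
  fixes f :: "'a \<Rightarrow> real"
  assumes "S \<in> space (PiM {..<n} (\<lambda>_. M))" and "\<And>z. z \<in> space M \<Longrightarrow> \<bar>f z\<bar> \<le> K"
  shows "\<bar>\<Sum>i<n. f (S i)\<bar> \<le> real n * K"
proof -
  have "\<bar>\<Sum>i<n. f (S i)\<bar> \<le> (\<Sum>i<n. K)"
    using assms by (intro order_trans[OF sum_abs] sum_mono) (auto simp: space_PiM PiE_iff)
  then show ?thesis by simp
qed

lemma abs_sample_mean_le:
  fixes f :: "'a \<Rightarrow> real"
  assumes "S \<in> space (PiM {..<n} (\<lambda>_. M))" and "\<And>z. z \<in> space M \<Longrightarrow> \<bar>f z\<bar> \<le> 1"
  shows "\<bar>(\<Sum>i<n. f (S i)) / real n\<bar> \<le> 1"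
  using abs_sum_components_le[OF assms]
  by (cases "n = 0") (simp_all add: abs_divide divide_le_eq_1)

lemma abs_sample_dev_le:
  assumes M: "prob_space M" and [measurable]: "f \<in> borel_measurable M"
    and f1: "\<And>z. z \<in> space M \<Longrightarrow> \<bar>f z\<bar> \<le> 1" and S: "S \<in> space (PiM {..<n} (\<lambda>_. M))"
  shows "\<bar>sample_dev M n f S\<bar> \<le> 2"
proof -
  interpret prob_space M by (rule M)
  have "\<bar>\<integral>z. f z \<partial>M\<bar> \<le> (\<integral>z. \<bar>f z\<bar> \<partial>M)"
    by (rule integral_abs_bound)
  also have "\<dots> \<le> 1"
  proof -
    have "integrable M f" by (rule integrable_bounded_prob[OF M _ f1]) measurable
    then show ?thesis by (intro integral_le_const AE_I2) (auto simp: f1)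
  qed
  finally have "\<bar>\<integral>z. f z \<partial>M\<bar> \<le> 1" .
  then show ?thesis using abs_sample_mean_le[of S n M f, OF S f1] unfolding sample_dev_def by linarith
qed

lemma integral_PiM_component:
  fixes f :: "'a \<Rightarrow> real"
  assumes M: "prob_space M" and i: "i < n" and [measurable]: "f \<in> borel_measurable M"
  shows "(\<integral>x. f (x i) \<partial>PiM {..<n} (\<lambda>_. M)) = (\<integral>z. f z \<partial>M)"
proof -
  have "(\<integral>x. f (x i) \<partial>PiM {..<n} (\<lambda>_. M)) = (\<integral>z. f z \<partial>distr (PiM {..<n} (\<lambda>_. M)) M (\<lambda>x. x i))"
    using i by (simp add: integral_distr)
  also have "distr (PiM {..<n} (\<lambda>_. M)) M (\<lambda>x. x i) = M"
    using M i by (intro distr_PiM_component) auto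
  finally show ?thesis .
qed

lemma integral_sample_mean:
  fixes f :: "'a \<Rightarrow> real"
  assumes M: "prob_space M" and n: "n > 0" and [measurable]: "f \<in> borel_measurable M"
    and f1: "\<And>z. z \<in> space M \<Longrightarrow> \<bar>f z\<bar> \<le> 1"
  shows "(\<integral>S. (\<Sum>i<n. f (S i)) / real n \<partial>PiM {..<n} (\<lambda>_. M)) = (\<integral>z. f z \<partial>M)"
proof -
  have "integrable (PiM {..<n} (\<lambda>_. M)) (\<lambda>S. f (S i))" if "i < n" for i
    using that f1 by (intro integrable_bounded_prob[where B=1] prob_space_PiM M)
      (auto simp: space_PiM PiE_iff)
  then have "(\<integral>S. (\<Sum>i<n. f (S i)) \<partial>PiM {..<n} (\<lambda>_. M)) = (\<Sum>i<n. \<integral>z. f z \<partial>M)"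
    by (simp add: Bochner_Integration.integral_sum integral_PiM_component[OF M])
  then show ?thesis using n by simp
qed

lemma sample_dev_tail:
  fixes f :: "'a \<Rightarrow> real"
  assumes M: "prob_space M" and n: "n > 0" and t: "t \<ge> 0" and [measurable]: "f \<in> borel_measurable M"
    and f1: "\<And>z. z \<in> space M \<Longrightarrow> \<bar>f z\<bar> \<le> 1"
  shows "measure (PiM {..<n} (\<lambda>_. M)) {S \<in> space (PiM {..<n} (\<lambda>_. M)). \<bar>sample_dev M n f S\<bar> \<ge> t}
          \<le> 2 * exp (- real n * t\<^sup>2 / 2)"
proof -
  define mean where "mean S = (\<Sum>i<n. f (S i)) / real n" for S
  have "(\<integral>S. mean S \<partial>PiM {..<n} (\<lambda>_. M)) = (\<integral>z. f z \<partial>M)"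
    unfolding mean_def by (rule integral_sample_mean[OF M n _ f1]) measurable
  then have dev_eq: "sample_dev M n f S = mean S - (\<integral>S. mean S \<partial>PiM {..<n} (\<lambda>_. M))" for S
    unfolding sample_dev_def mean_def by simp
  have "\<bar>mean S - mean (S(i:=y))\<bar> \<le> 2 / real n"
    if "S \<in> space (PiM {..<n} (\<lambda>_. M))" "i < n" "y \<in> space M" for S i y
  proof -
    have "\<bar>f y - f (S i)\<bar> \<le> 2"
      using f1[OF that(3)] f1[of "S i"] that by (auto simp: space_PiM PiE_iff)
    then show ?thesis
      using sample_dev_fun_upd[OF that(2), of M f S y] n
      unfolding sample_dev_def mean_def by (simp add: abs_divide divide_right_mono)
  qed
  then have "measure (PiM {..<n} (\<lambda>_. M))
      {S \<in> space (PiM {..<n} (\<lambda>_. M)). \<bar>mean S - (\<integral>S. mean S \<partial>PiM {..<n} (\<lambda>_. M))\<bar> \<ge> t}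
      \<le> 2 * exp (- 2 * t\<^sup>2 / (real n * (2 / real n)\<^sup>2))"
    using n abs_sample_mean_le[of _ n M f, OF _ f1]
    by (intro McDiarmid_ineq_abs[OF M n _ t, where B=1]) (auto simp: mean_def)
  also have "- 2 * t\<^sup>2 / (real n * (2 / real n)\<^sup>2) = - real n * t\<^sup>2 / 2"
    using n by (simp add: field_simps power2_eq_square)
  finally show ?thesis
    unfolding dev_eq .
qed

lemma integral_sum_centered_sq_PiM:
  fixes f :: "'a \<Rightarrow> real"
  assumes M: "prob_space M" and [measurable]: "f \<in> borel_measurable M"
    and fK: "\<And>z. z \<in> space M \<Longrightarrow> \<bar>f z\<bar> \<le> K" and f0: "(\<integral>z. f z \<partial>M) = 0"
  shows "(\<integral>x. (\<Sum>i<n. f (x i))\<^sup>2 \<partial>PiM {..<n} (\<lambda>_. M)) = real n * (\<integral>z. (f z)\<^sup>2 \<partial>M)"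
proof (induction n)
  case 0
  then show ?case by (simp add: PiM_empty lebesgue_integral_count_space_finite)
next
  case (Suc n)
  interpret M: prob_space M by (rule M)
  interpret P: product_prob_space "\<lambda>_. M" by unfold_locales
  define Q where "Q = PiM {..<n} (\<lambda>_. M)"
  interpret Q: prob_space Q unfolding Q_def by (intro prob_space_PiM M)
  have PS: "PiM {..<Suc n} (\<lambda>_. M) = PiM (insert n {..<n}) (\<lambda>_. M)"
    by (simp add: lessThan_Suc)
  have f_int: "integrable M f" by (rule integrable_bounded_prob[OF M _ fK]) measurable
  have f2_int: "integrable M (\<lambda>z. (f z)\<^sup>2)"
    using fK by (intro integrable_bounded_prob[OF M, where B="K\<^sup>2"])
      (auto, meson abs_ge_zero order_trans power2_le_iff_abs_le)
  have sq_sum_int: "integrable (PiM {..<k} (\<lambda>_. M)) (\<lambda>x. (\<Sum>i<k. f (x i))\<^sup>2)" for k :: nat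
  proof (rule integrable_bounded_prob[OF prob_space_PiM[OF M], where B="(real k * K)\<^sup>2"])
    fix x assume "x \<in> space (PiM {..<k} (\<lambda>_. M))"
    then have "\<bar>\<Sum>i<k. f (x i)\<bar> \<le> \<bar>real k * K\<bar>"
      using abs_sum_components_le[of x k M f K] fK by fastforce
    then show "\<bar>(\<Sum>i<k. f (x i))\<^sup>2\<bar> \<le> (real k * K)\<^sup>2" by (simp add: abs_le_square_iff)
  qed measurable
  have "(\<integral>x. (\<Sum>i<Suc n. f (x i))\<^sup>2 \<partial>PiM {..<Suc n} (\<lambda>_. M))
      = (\<integral>x. (\<integral>y. (\<Sum>i<Suc n. f ((x(n:=y)) i))\<^sup>2 \<partial>M) \<partial>Q)"
    using sq_sum_int[of "Suc n"] unfolding PS Q_def by (intro P.product_integral_insert) auto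
  also have "\<dots> = (\<integral>x. (\<Sum>i<n. f (x i))\<^sup>2 + (\<integral>z. (f z)\<^sup>2 \<partial>M) \<partial>Q)"
  proof (intro Bochner_Integration.integral_cong refl)
    fix x
    define s where "s = (\<Sum>i<n. f (x i))"
    have "(\<integral>y. (\<Sum>i<Suc n. f ((x(n:=y)) i))\<^sup>2 \<partial>M) = (\<integral>y. s\<^sup>2 + 2 * s * f y + (f y)\<^sup>2 \<partial>M)"
      by (simp add: s_def power2_eq_square algebra_simps)
    also have "\<dots> = s\<^sup>2 + (\<integral>z. (f z)\<^sup>2 \<partial>M)"
      using f_int f2_int f0 by (simp add: M.prob_space)
    finally show "(\<integral>y. (\<Sum>i<Suc n. f ((x(n:=y)) i))\<^sup>2 \<partial>M) = (\<Sum>i<n. f (x i))\<^sup>2 + (\<integral>z. (f z)\<^sup>2 \<partial>M)"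
      by (simp add: s_def)
  qed
  also have "\<dots> = (\<integral>x. (\<Sum>i<n. f (x i))\<^sup>2 \<partial>Q) + (\<integral>z. (f z)\<^sup>2 \<partial>M)"
    using sq_sum_int[of n, folded Q_def] by (simp add: Q.prob_space)
  also have "\<dots> = real (Suc n) * (\<integral>z. (f z)\<^sup>2 \<partial>M)"
    using Suc.IH unfolding Q_def by (simp add: algebra_simps)
  finally show ?case .
qed

lemma integral_sample_dev_sq_le:
  fixes f :: "'a \<Rightarrow> real"
  assumes M: "prob_space M" and n: "n > 0" and [measurable]: "f \<in> borel_measurable M"
    and f1: "\<And>z. z \<in> space M \<Longrightarrow> \<bar>f z\<bar> \<le> 1"
  shows "(\<integral>S. (sample_dev M n f S)\<^sup>2 \<partial>PiM {..<n} (\<lambda>_. M)) \<le> (\<integral>z. (f z)\<^sup>2 \<partial>M) / real n"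
proof -
  interpret M: prob_space M by (rule M)
  define \<mu> where "\<mu> = (\<integral>z. f z \<partial>M)"
  have f_int: "integrable M f" by (rule integrable_bounded_prob[OF M _ f1]) measurable
  have f2_int: "integrable M (\<lambda>z. (f z)\<^sup>2)"
    using f1 by (intro integrable_bounded_prob[OF M, where B=1]) (auto simp: abs_square_le_1)
  have "\<bar>\<mu>\<bar> \<le> 1"
    unfolding \<mu>_def using f1 f_int
    by (intro order_trans[OF integral_abs_bound] M.integral_le_const AE_I2) (auto simp: f1)
  then have centred_bound: "\<bar>f z - \<mu>\<bar> \<le> 2" if "z \<in> space M" for z
    using f1[OF that] by linarith
  have centred_mean: "(\<integral>z. f z - \<mu> \<partial>M) = 0"
    unfolding \<mu>_def using f_int by (simp add: M.prob_space)
  have "sample_dev M n f S = (\<Sum>i<n. f (S i) - \<mu>) / real n" for S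
    unfolding sample_dev_def \<mu>_def using n by (simp add: sum_subtractf diff_divide_distrib)
  then have "(\<integral>S. (sample_dev M n f S)\<^sup>2 \<partial>PiM {..<n} (\<lambda>_. M))
      = (\<integral>S. (\<Sum>i<n. f (S i) - \<mu>)\<^sup>2 \<partial>PiM {..<n} (\<lambda>_. M)) / (real n)\<^sup>2"
    by (simp add: power_divide)
  also have "\<dots> = real n * (\<integral>z. (f z - \<mu>)\<^sup>2 \<partial>M) / (real n)\<^sup>2"
    by (simp add: integral_sum_centered_sq_PiM[OF M _ centred_bound centred_mean])
  also have "\<dots> = (\<integral>z. (f z - \<mu>)\<^sup>2 \<partial>M) / real n"
    using n by (simp add: power2_eq_square)
  also have "(\<integral>z. (f z - \<mu>)\<^sup>2 \<partial>M) = (\<integral>z. (f z)\<^sup>2 - 2 * \<mu> * f z + \<mu>\<^sup>2 \<partial>M)"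
    by (simp add: power2_diff algebra_simps)
  also have "\<dots> = (\<integral>z. (f z)\<^sup>2 \<partial>M) - \<mu>\<^sup>2"
    using f_int f2_int by (simp add: M.prob_space \<mu>_def power2_eq_square)
  also have "(\<dots>) / real n \<le> (\<integral>z. (f z)\<^sup>2 \<partial>M) / real n"
    by (intro divide_right_mono) auto
  finally show ?thesis .
qed

lemma (in prob_space) expectation_le_sqrt_expectation_sq:
  fixes f :: "'a \<Rightarrow> real"
  assumes "integrable M f" "integrable M (\<lambda>x. (f x)\<^sup>2)"
  shows "expectation f \<le> sqrt (expectation (\<lambda>x. (f x)\<^sup>2))"
proof -
  have "(expectation f)\<^sup>2 \<le> expectation (\<lambda>x. (f x)\<^sup>2)"
    using variance_positive[of f] variance_eq[OF assms] by simp
  then show ?thesis by (simp add: real_le_rsqrt)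
qed

lemma sample_dev_union_bound:
  fixes f :: "'i::finite \<Rightarrow> 'a \<Rightarrow> real"
  assumes M: "prob_space M" and n: "n > 0" and \<delta>: "0 < \<delta>" "\<delta> < 1"
    and f[measurable]: "\<And>a. f a \<in> borel_measurable M"
    and f1: "\<And>a z. z \<in> space M \<Longrightarrow> \<bar>f a z\<bar> \<le> 1"
  defines "t \<equiv> sqrt (2 * ln (2 * real CARD('i) / \<delta>) / real n)"
  shows "measure (PiM {..<n} (\<lambda>_. M))
           {S \<in> space (PiM {..<n} (\<lambda>_. M)). \<forall>a. \<bar>sample_dev M n (f a) S\<bar> < t} \<ge> 1 - \<delta>"
proof -
  define P where "P = PiM {..<n} (\<lambda>_. M)"
  interpret P: prob_space P unfolding P_def by (intro prob_space_PiM M)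
  define N where "N = real CARD('i)"
  have N: "N \<ge> 1" unfolding N_def by (simp add: Suc_le_eq)
  have ln_nonneg: "0 \<le> ln (2 * N / \<delta>)" using N \<delta> by simp
  then have t: "t \<ge> 0" unfolding t_def N_def by simp
  define bad where "bad a = {S \<in> space P. t \<le> \<bar>sample_dev M n (f a) S\<bar>}" for a
  have bad_sets: "bad a \<in> sets P" for a unfolding bad_def P_def by measurable
  have "P.prob (\<Union>a. bad a) \<le> (\<Sum>a\<in>UNIV. P.prob (bad a))"
    using bad_sets by (intro measure_UNION_le) auto
  also have "\<dots> \<le> (\<Sum>a\<in>(UNIV :: 'i set). 2 * exp (- real n * t\<^sup>2 / 2))"
    unfolding bad_def P_def using sample_dev_tail[OF M n t f f1] by (intro sum_mono) auto
  also have "\<dots> = \<delta>"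
  proof -
    have "real n * t\<^sup>2 / 2 = ln (2 * N / \<delta>)" unfolding t_def N_def[symmetric] using n ln_nonneg by simp
    then have "exp (- real n * t\<^sup>2 / 2) = \<delta> / (2 * N)" using N \<delta> by (simp add: exp_minus)
    then show ?thesis using N by (simp add: N_def)
  qed
  finally have "P.prob (\<Union>a. bad a) \<le> \<delta>" .
  moreover have "{S \<in> space P. \<forall>a. \<bar>sample_dev M n (f a) S\<bar> < t} = space P - (\<Union>a. bad a)"
    by (auto simp: bad_def not_le) (metis leD)
  ultimately show ?thesis
    using P.prob_compl[of "\<Union>a. bad a"] bad_sets unfolding P_def[symmetric] by auto
qed

definition dev_norm :: "'a measure \<Rightarrow> nat \<Rightarrow> ('i \<Rightarrow> 'a \<Rightarrow> real) \<Rightarrow> (nat \<Rightarrow> 'a) \<Rightarrow> real" where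
  "dev_norm M n f S = L2_set (\<lambda>a. sample_dev M n (f a) S) UNIV"

lemma dev_norm_measurable[measurable]:
  assumes [measurable]: "\<And>a. f a \<in> borel_measurable M"
  shows "dev_norm M n f \<in> borel_measurable (PiM {..<n} (\<lambda>_. M))"
  unfolding dev_norm_def L2_set_def by measurable

lemma abs_L2_set_diff_le: "\<bar>L2_set f A - L2_set g A\<bar> \<le> L2_set (\<lambda>a. f a - g a) A"
proof -
  have "L2_set f A \<le> L2_set g A + L2_set (\<lambda>a. f a - g a) A"
    using L2_set_triangle_ineq[of g "\<lambda>a. f a - g a" A] by simp
  moreover have "L2_set g A \<le> L2_set f A + L2_set (\<lambda>a. g a - f a) A"
    using L2_set_triangle_ineq[of f "\<lambda>a. g a - f a" A] by simp
  moreover have "L2_set (\<lambda>a. g a - f a) A = L2_set (\<lambda>a. f a - g a) A"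
    unfolding L2_set_def by (simp add: power2_commute)
  ultimately show ?thesis by linarith
qed

lemma abs_dev_norm_le:
  fixes f :: "'i::finite \<Rightarrow> 'a \<Rightarrow> real"
  assumes M: "prob_space M" and [measurable]: "\<And>a. f a \<in> borel_measurable M"
    and f1: "\<And>a z. z \<in> space M \<Longrightarrow> \<bar>f a z\<bar> \<le> 1" and S: "S \<in> space (PiM {..<n} (\<lambda>_. M))"
  shows "\<bar>dev_norm M n f S\<bar> \<le> 2 * real CARD('i)"
proof -
  have "\<bar>dev_norm M n f S\<bar> \<le> (\<Sum>a\<in>UNIV. \<bar>sample_dev M n (f a) S\<bar>)"
    unfolding dev_norm_def by (simp add: L2_set_le_sum_abs)
  also have "\<dots> \<le> (\<Sum>a\<in>(UNIV :: 'i set). 2)"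
    using f1 S by (intro sum_mono abs_sample_dev_le[OF M]) auto
  finally show ?thesis by simp
qed

lemma dev_norm_fun_upd:
  fixes f :: "'i::finite \<Rightarrow> 'a \<Rightarrow> real"
  assumes fK: "\<And>z. z \<in> space M \<Longrightarrow> (\<Sum>a\<in>UNIV. (f a z)\<^sup>2) \<le> K"
    and S: "S \<in> space (PiM {..<n} (\<lambda>_. M))" and i: "i < n" and y: "y \<in> space M"
  shows "\<bar>dev_norm M n f S - dev_norm M n f (S(i:=y))\<bar> \<le> 2 * sqrt K / real n"
proof -
  have L2_le: "L2_set (\<lambda>a. f a z) UNIV \<le> sqrt K" if "z \<in> space M" for z
    unfolding L2_set_def using fK[OF that] by simp
  have "\<bar>dev_norm M n f S - dev_norm M n f (S(i:=y))\<bar>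
      \<le> L2_set (\<lambda>a. sample_dev M n (f a) S - sample_dev M n (f a) (S(i:=y))) UNIV"
    unfolding dev_norm_def by (rule abs_L2_set_diff_le)
  also have "(\<lambda>a. sample_dev M n (f a) S - sample_dev M n (f a) (S(i:=y)))
      = (\<lambda>a. (1 / real n) * (f a (S i) + (- f a y)))"
    by (simp add: sample_dev_fun_upd[OF i] fun_eq_iff diff_divide_distrib)
  also have "L2_set \<dots> UNIV = (1 / real n) * L2_set (\<lambda>a. f a (S i) + (- f a y)) UNIV"
    by (rule L2_set_right_distrib[symmetric]) simp
  also have "\<dots> \<le> (1 / real n) * (L2_set (\<lambda>a. f a (S i)) UNIV + L2_set (\<lambda>a. - f a y) UNIV)"
    by (intro mult_left_mono L2_set_triangle_ineq) simp
  also have "L2_set (\<lambda>a. - f a y) UNIV = L2_set (\<lambda>a. f a y) UNIV" by (simp add: L2_set_def)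
  also have "(1 / real n) * (L2_set (\<lambda>a. f a (S i)) UNIV + L2_set (\<lambda>a. f a y) UNIV)
      \<le> (1 / real n) * (sqrt K + sqrt K)"
    using S i y by (intro mult_left_mono add_mono L2_le) (auto simp: space_PiM PiE_iff)
  finally show ?thesis by (simp del: fun_upd_apply)
qed

lemma integral_dev_norm_le:
  fixes f :: "'i::finite \<Rightarrow> 'a \<Rightarrow> real"
  assumes M: "prob_space M" and n: "n > 0" and [measurable]: "\<And>a. f a \<in> borel_measurable M"
    and f1: "\<And>a z. z \<in> space M \<Longrightarrow> \<bar>f a z\<bar> \<le> 1"
    and fK: "\<And>z. z \<in> space M \<Longrightarrow> (\<Sum>a\<in>UNIV. (f a z)\<^sup>2) \<le> K"
  shows "(\<integral>S. dev_norm M n f S \<partial>PiM {..<n} (\<lambda>_. M)) \<le> sqrt (K / real n)"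
proof -
  define P where "P = PiM {..<n} (\<lambda>_. M)"
  interpret M: prob_space M by (rule M)
  interpret P: prob_space P unfolding P_def by (intro prob_space_PiM M)
  have dev_sq_int: "integrable P (\<lambda>S. (sample_dev M n (f a) S)\<^sup>2)" for a
  proof (rule integrable_bounded_prob[OF P.prob_space_axioms, where B=4])
    fix S assume "S \<in> space P"
    then have "\<bar>sample_dev M n (f a) S\<bar> \<le> 2"
      using f1 unfolding P_def by (intro abs_sample_dev_le[OF M]) auto
    then show "\<bar>(sample_dev M n (f a) S)\<^sup>2\<bar> \<le> 4"
      using power2_le_iff_abs_le[of 2 "sample_dev M n (f a) S"] by simp
  qed (simp add: P_def)
  have sq_eq: "(dev_norm M n f S)\<^sup>2 = (\<Sum>a\<in>UNIV. (sample_dev M n (f a) S)\<^sup>2)" for S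
    unfolding dev_norm_def L2_set_def by (simp add: sum_nonneg)
  have f_sq_int: "integrable M (\<lambda>z. (f a z)\<^sup>2)" for a
    using f1 by (intro integrable_bounded_prob[OF M, where B=1]) (auto simp: abs_square_le_1)
  have "(\<integral>S. dev_norm M n f S \<partial>P) \<le> sqrt (\<integral>S. (dev_norm M n f S)\<^sup>2 \<partial>P)"
  proof (rule P.expectation_le_sqrt_expectation_sq)
    show "integrable P (dev_norm M n f)"
      using f1 by (intro integrable_bounded_prob[OF P.prob_space_axioms _ abs_dev_norm_le[OF M]])
        (auto simp: P_def)
    show "integrable P (\<lambda>S. (dev_norm M n f S)\<^sup>2)" unfolding sq_eq using dev_sq_int by simp
  qed
  also have "(\<integral>S. (dev_norm M n f S)\<^sup>2 \<partial>P) = (\<Sum>a\<in>UNIV. \<integral>S. (sample_dev M n (f a) S)\<^sup>2 \<partial>P)"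
    unfolding sq_eq using dev_sq_int by simp
  also have "\<dots> \<le> (\<Sum>a\<in>UNIV. (\<integral>z. (f a z)\<^sup>2 \<partial>M) / real n)"
    unfolding P_def using f1 by (intro sum_mono integral_sample_dev_sq_le[OF M n]) auto
  also have "\<dots> = (\<integral>z. (\<Sum>a\<in>UNIV. (f a z)\<^sup>2) \<partial>M) / real n"
    using f_sq_int by (simp add: sum_divide_distrib[symmetric])
  also have "\<dots> \<le> K / real n"
    using fK f_sq_int by (intro divide_right_mono M.integral_le_const AE_I2) auto
  finally show ?thesis by (simp add: P_def)
qed

lemma dev_norm_concentration:
  fixes f :: "'i::finite \<Rightarrow> 'a \<Rightarrow> real"
  assumes M: "prob_space M" and n: "n > 0" and \<delta>: "0 < \<delta>" "\<delta> < 1" and K: "K > 0"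
    and f[measurable]: "\<And>a. f a \<in> borel_measurable M"
    and f1: "\<And>a z. z \<in> space M \<Longrightarrow> \<bar>f a z\<bar> \<le> 1"
    and fK: "\<And>z. z \<in> space M \<Longrightarrow> (\<Sum>a\<in>UNIV. (f a z)\<^sup>2) \<le> K"
  shows "measure (PiM {..<n} (\<lambda>_. M)) {S \<in> space (PiM {..<n} (\<lambda>_. M)).
           dev_norm M n f S < sqrt (K / real n) + sqrt (2 * K * ln (1 / \<delta>) / real n)} \<ge> 1 - \<delta>"
proof -
  define P where "P = PiM {..<n} (\<lambda>_. M)"
  interpret P: prob_space P unfolding P_def by (intro prob_space_PiM M)
  define E where "E = (\<integral>S. dev_norm M n f S \<partial>P)"
  define t where "t = sqrt (2 * K * ln (1 / \<delta>) / real n)"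
  define bad where "bad = {S \<in> space P. dev_norm M n f S \<ge> E + t}"
  have t: "t \<ge> 0" unfolding t_def using \<delta> K by simp
  have bad_sets: "bad \<in> sets P" unfolding bad_def P_def by measurable
  have "P.prob bad \<le> exp (- 2 * t\<^sup>2 / (real n * (2 * sqrt K / real n)\<^sup>2))"
    unfolding bad_def E_def P_def
  proof (rule McDiarmid_ineq_ge[OF M n _ t])
    show "0 < 2 * sqrt K / real n" using K n by simp
  qed (auto intro: abs_dev_norm_le[OF M f f1] dev_norm_fun_upd[OF fK])
  also have "- 2 * t\<^sup>2 / (real n * (2 * sqrt K / real n)\<^sup>2) = - ln (1 / \<delta>)"
    unfolding t_def using \<delta> K n by (simp add: field_simps power2_eq_square)
  also have "exp (- ln (1 / \<delta>)) = \<delta>" using \<delta> by (simp add: exp_minus)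
  finally have "P.prob bad \<le> \<delta>" .
  have "E \<le> sqrt (K / real n)"
    unfolding E_def P_def by (rule integral_dev_norm_le[OF M n f f1 fK])
  then have "space P - bad \<subseteq> {S \<in> space P. dev_norm M n f S < sqrt (K / real n) + t}"
    by (auto simp: bad_def)
  then have "P.prob (space P - bad) \<le> P.prob {S \<in> space P. dev_norm M n f S < sqrt (K / real n) + t}"
    by (intro P.finite_measure_mono) (auto simp: P_def)
  moreover have "P.prob (space P - bad) = 1 - P.prob bad" by (rule P.prob_compl[OF bad_sets])
  ultimately show ?thesis using \<open>P.prob bad \<le> \<delta>\<close> unfolding P_def t_def by linarith
qed

section \<open>Population risk and the noise level\<close>

lemma subalgebra_vimage_algebra_fst:
  fixes D :: "('a::topological_space \<times> 'b::topological_space) measure"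
  assumes "sets D = sets borel"
  shows "subalgebra D (vimage_algebra (space D) fst borel)"
proof -
  have "fst \<in> borel_measurable (borel :: ('a \<times> 'b) measure)"
    by (intro borel_measurable_continuous_onI continuous_intros)
  then have "fst \<in> measurable D borel" using assms by (simp cong: measurable_cong_sets)
  then show ?thesis
    unfolding subalgebra_def by (auto simp: sets_vimage_algebra2 intro: measurable_sets)
qed

lemma integral_eq_if_AE_real_cond_exp_eq:
  assumes "prob_space M" "subalgebra M F" "integrable M f"
    and "AE x in M. real_cond_exp M F f x = c"
  shows "(\<integral>x. f x \<partial>M) = c"
proof -
  interpret prob_space M by fact
  interpret finite_measure_subalgebra M F by unfold_locales (rule assms(2))
  have "(\<integral>x. f x \<partial>M) = (\<integral>x. real_cond_exp M F f x \<partial>M)"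
    using real_cond_exp_int(2)[OF assms(3)] by simp
  also have "\<dots> = (\<integral>x. c \<partial>M)" by (rule integral_cong_AE) (use assms(4) in auto)
  finally show ?thesis by (simp add: prob_space)
qed

lemma integral_mult_eq_0_if_AE_real_cond_exp_0:
  assumes "finite_measure M" "subalgebra M F" "integrable M (\<lambda>x. g x * f x)"
    and "g \<in> borel_measurable F" "f \<in> borel_measurable M"
    and "AE x in M. real_cond_exp M F f x = 0"
  shows "(\<integral>x. g x * f x \<partial>M) = 0"
proof -
  interpret finite_measure M by fact
  interpret finite_measure_subalgebra M F by unfold_locales (rule assms(2))
  have [measurable]: "g \<in> borel_measurable M" by (rule measurable_from_subalg[OF subalg assms(4)])
  have "(\<integral>x. g x * f x \<partial>M) = (\<integral>x. g x * real_cond_exp M F f x \<partial>M)"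
    using real_cond_exp_intg(2)[OF assms(3-5)] by simp
  also have "\<dots> = (\<integral>x. 0 \<partial>M)" by (rule integral_cong_AE) (use assms(6) in auto)
  finally show ?thesis by simp
qed

lemma (in finite_measure) integrable_mult_AE_abs_le:
  fixes f g :: "'a \<Rightarrow> real"
  assumes "f \<in> borel_measurable M" "g \<in> borel_measurable M"
    and "AE x in M. \<bar>f x\<bar> \<le> B" "AE x in M. \<bar>g x\<bar> \<le> B"
  shows "integrable M (\<lambda>x. f x * g x)"
proof (rule integrable_const_bound[where B="B * B"])
  show "AE x in M. norm (f x * g x) \<le> B * B"
    using assms(3,4) by eventually_elim (auto simp: abs_mult intro!: mult_mono)
qed (use assms(1,2) in simp)

lemma norm1_nonneg: "norm1 w \<ge> 0"
  by (simp add: norm1_def sum_nonneg)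

lemma abs_inner_le_norm1:
  fixes w x :: "real^'d"
  assumes "\<And>i. \<bar>x $ i\<bar> \<le> 1"
  shows "\<bar>w \<bullet> x\<bar> \<le> norm1 w"
proof -
  have "\<bar>w \<bullet> x\<bar> \<le> (\<Sum>i\<in>UNIV. \<bar>w $ i\<bar> * \<bar>x $ i\<bar>)"
    unfolding inner_vec_def by (rule order_trans[OF sum_abs]) (simp add: abs_mult)
  also have "\<dots> \<le> (\<Sum>i\<in>UNIV. \<bar>w $ i\<bar>)"
    using assms by (intro sum_mono mult_left_le) auto
  finally show ?thesis by (simp add: norm1_def)
qed

definition risk :: "((real^'d) \<times> real) measure \<Rightarrow> real^'d \<Rightarrow> real" where
  "risk D w = (\<integral>z. (w \<bullet> fst z - snd z)\<^sup>2 \<partial>D)"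

lemma risk_eq_excess_risk_add_noise_var:
  fixes D :: "((real^'d) \<times> real) measure" and w wstar :: "real^'d"
  assumes prob: "prob_space D"
    and sets_D[measurable_cong]: "sets D = sets borel"
    and bdd: "AE z in D. (\<forall>i. \<bar>fst z $ i\<bar> \<le> 1) \<and> \<bar>snd z\<bar> \<le> 1"
    and noise_mean: "AE z in D. real_cond_exp D (vimage_algebra (space D) fst borel)
                        (\<lambda>z. snd z - wstar \<bullet> fst z) z = 0"
    and noise_var: "AE z in D. real_cond_exp D (vimage_algebra (space D) fst borel)
                        (\<lambda>z. (snd z - wstar \<bullet> fst z)^2) z = \<sigma>^2"
  shows "risk D w = (\<integral>z. ((w - wstar) \<bullet> fst z)\<^sup>2 \<partial>D) + \<sigma>\<^sup>2"
proof -
  interpret D: prob_space D by (rule prob)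
  define F where "F = vimage_algebra (space D) fst (borel :: (real^'d) measure)"
  have F: "subalgebra D F" unfolding F_def using sets_D by (rule subalgebra_vimage_algebra_fst)
  define e where "e z = snd z - wstar \<bullet> fst z" for z :: "(real^'d) \<times> real"
  define d where "d z = (w - wstar) \<bullet> fst z" for z :: "(real^'d) \<times> real"
  have inner_borel: "(\<lambda>x. v \<bullet> x) \<in> borel_measurable borel" for v :: "real^'d"
    by (intro borel_measurable_continuous_onI continuous_intros)
  have [measurable]: "fst \<in> borel_measurable (borel :: ((real^'d) \<times> real) measure)"
    "snd \<in> borel_measurable (borel :: ((real^'d) \<times> real) measure)"
    by (intro borel_measurable_continuous_onI continuous_intros)+
  have [measurable]: "e \<in> borel_measurable D" "d \<in> borel_measurable D"
    unfolding e_def[abs_def] d_def[abs_def] using inner_borel by measurable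
  have d_F: "d \<in> borel_measurable F"
    unfolding d_def[abs_def] F_def
    by (rule measurable_compose[OF measurable_vimage_algebra1 inner_borel]) simp
  define B where "B = norm1 (w - wstar) + norm1 wstar + 1"
  have "AE z in D. \<bar>d z\<bar> \<le> B"
    using bdd
  proof eventually_elim
    case (elim z)
    then have "\<bar>d z\<bar> \<le> norm1 (w - wstar)" unfolding d_def by (intro abs_inner_le_norm1) auto
    then show ?case using norm1_nonneg[of wstar] unfolding B_def by linarith
  qed
  moreover have "AE z in D. \<bar>e z\<bar> \<le> B"
    using bdd
  proof eventually_elim
    case (elim z)
    then have "\<bar>wstar \<bullet> fst z\<bar> \<le> norm1 wstar" by (intro abs_inner_le_norm1) auto
    then show ?case using elim norm1_nonneg[of "w - wstar"] unfolding B_def e_def by linarith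
  qed
  ultimately have dd: "integrable D (\<lambda>z. d z * d z)" and de: "integrable D (\<lambda>z. d z * e z)"
    and ee: "integrable D (\<lambda>z. e z * e z)"
    by (auto intro: D.integrable_mult_AE_abs_le)
  have "risk D w = (\<integral>z. d z * d z - 2 * (d z * e z) + e z * e z \<partial>D)"
    unfolding risk_def d_def e_def by (simp add: inner_diff_left power2_eq_square algebra_simps)
  also have "\<dots> = (\<integral>z. d z * d z \<partial>D) - 2 * (\<integral>z. d z * e z \<partial>D) + (\<integral>z. e z * e z \<partial>D)"
    using dd de ee by simp
  also have "(\<integral>z. d z * e z \<partial>D) = 0"
    using noise_mean de d_F
    by (intro integral_mult_eq_0_if_AE_real_cond_exp_0[OF D.finite_measure_axioms F])
       (auto simp: F_def e_def[abs_def])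
  also have "(\<integral>z. e z * e z \<partial>D) = \<sigma>\<^sup>2"
    using noise_var ee
    by (intro integral_eq_if_AE_real_cond_exp_eq[OF prob F])
       (auto simp: F_def e_def[abs_def] power2_eq_square)
  finally show ?thesis by (simp add: d_def power2_eq_square)
qed

lemma abs_noise_var_minus_emp_risk_le:
  assumes erm: "is_erm p m S w" and wstar: "pnorm p wstar \<le> 1"
    and risk_wstar: "risk D wstar = \<sigma>\<^sup>2" and risk_w: "\<sigma>\<^sup>2 \<le> risk D w"
    and uniform: "\<And>v. pnorm p v \<le> 1 \<Longrightarrow> \<bar>emp_risk m S v - risk D v\<bar> \<le> R"
  shows "\<bar>\<sigma>\<^sup>2 - emp_risk m S w\<bar> \<le> R"
proof -
  have "pnorm p w \<le> 1" "emp_risk m S w \<le> emp_risk m S wstar"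
    using erm wstar unfolding is_erm_def by auto
  then show ?thesis
    using uniform[of w] uniform[OF wstar] risk_wstar risk_w unfolding abs_le_iff by linarith
qed

section \<open>The square loss as a combination of monomials\<close>

definition loss_monomial :: "('d \<times> 'd) + 'd option \<Rightarrow> (real^'d) \<times> real \<Rightarrow> real" where
  "loss_monomial a z = (case a of
     Inl (j, k) \<Rightarrow> fst z $ j * fst z $ k | Inr (Some j) \<Rightarrow> fst z $ j * snd z | Inr None \<Rightarrow> (snd z)\<^sup>2)"

definition loss_coeff :: "real^'d \<Rightarrow> ('d \<times> 'd) + 'd option \<Rightarrow> real" where
  "loss_coeff w a = (case a of Inl (j, k) \<Rightarrow> w $ j * w $ k | Inr (Some j) \<Rightarrow> - 2 * w $ j | Inr None \<Rightarrow> 1)"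

lemma sum_UNIV_Plus_option:
  fixes h :: "('i::finite \<times> 'i) + 'i option \<Rightarrow> 'b::comm_monoid_add"
  shows "(\<Sum>a\<in>UNIV. h a) = (\<Sum>j\<in>UNIV. \<Sum>k\<in>UNIV. h (Inl (j, k))) + (\<Sum>j\<in>UNIV. h (Inr (Some j))) + h (Inr None)"
proof -
  have "(\<Sum>a\<in>UNIV. h a) = (\<Sum>p\<in>UNIV. h (Inl p)) + (\<Sum>b\<in>UNIV. h (Inr b))"
    by (subst UNIV_Plus_UNIV[symmetric], subst sum.Plus) auto
  also have "(\<Sum>p\<in>UNIV. h (Inl p)) = (\<Sum>j\<in>UNIV. \<Sum>k\<in>UNIV. h (Inl (j, k)))"
    by (simp add: sum.cartesian_product UNIV_Times_UNIV[symmetric] del: UNIV_Times_UNIV)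
  also have "(\<Sum>b\<in>UNIV. h (Inr b)) = h (Inr None) + (\<Sum>j\<in>UNIV. h (Inr (Some j)))"
    by (simp add: UNIV_option_conv sum.reindex)
  finally show ?thesis by (simp add: ac_simps)
qed

lemma sq_loss_eq_sum_loss_monomials:
  fixes w :: "real^'d"
  shows "(w \<bullet> fst z - snd z)\<^sup>2 = (\<Sum>a\<in>UNIV. loss_coeff w a * loss_monomial a z)"
proof -
  define u where "u = w \<bullet> fst z"
  have "u * u = (\<Sum>j\<in>UNIV. \<Sum>k\<in>UNIV. w $ j * w $ k * (fst z $ j * fst z $ k))"
    unfolding u_def inner_vec_def sum_product by (simp add: mult_ac)
  moreover have "u * snd z = (\<Sum>j\<in>UNIV. w $ j * (fst z $ j * snd z))"
    unfolding u_def inner_vec_def sum_distrib_right by (simp add: mult_ac)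
  moreover have "(u - snd z)\<^sup>2 = u * u - 2 * (u * snd z) + (snd z)\<^sup>2"
    by (simp add: power2_eq_square algebra_simps)
  ultimately show ?thesis
    unfolding u_def sum_UNIV_Plus_option loss_coeff_def loss_monomial_def
    by (simp add: sum_distrib_left sum_negf mult_ac)
qed

lemma loss_monomial_measurable[measurable]: "loss_monomial a \<in> borel_measurable borel"
proof (intro borel_measurable_continuous_onI)
  show "continuous_on UNIV (loss_monomial a)"
  proof (cases a)
    case (Inl p)
    then show ?thesis by (cases p) (auto simp: loss_monomial_def[abs_def] intro!: continuous_intros)
  next
    case (Inr b)
    then show ?thesis by (cases b) (auto simp: loss_monomial_def[abs_def] intro!: continuous_intros)
  qed
qed

lemma abs_loss_monomial_le:
  assumes "\<And>j. \<bar>fst z $ j\<bar> \<le> 1" and "\<bar>snd z\<bar> \<le> 1"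
  shows "\<bar>loss_monomial a z\<bar> \<le> 1"
  using assms unfolding loss_monomial_def
  by (auto split: sum.splits option.splits simp: abs_mult abs_square_le_1 intro: mult_le_one)

lemma sum_sq_loss_monomial_le:
  assumes x: "norm (fst z) \<le> 1" and y: "\<bar>snd z\<bar> \<le> 1"
  shows "(\<Sum>a\<in>UNIV. (loss_monomial a z)\<^sup>2) \<le> 3"
proof -
  define r where "r = (\<Sum>j\<in>UNIV. (fst z $ j)\<^sup>2)"
  have r: "0 \<le> r" "r \<le> 1"
    using x unfolding r_def by (auto simp: sum_nonneg norm_vec_def L2_set_def)
  have y2: "(snd z)\<^sup>2 \<le> 1" using y by (simp add: abs_square_le_1)
  have "(\<Sum>j\<in>UNIV. \<Sum>k\<in>UNIV. (fst z $ j * fst z $ k)\<^sup>2) = r * r"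
    unfolding r_def sum_product by (simp add: power_mult_distrib)
  moreover have "(\<Sum>j\<in>UNIV. (fst z $ j * snd z)\<^sup>2) = r * (snd z)\<^sup>2"
    unfolding r_def sum_distrib_right by (simp add: power_mult_distrib)
  ultimately have "(\<Sum>a\<in>UNIV. (loss_monomial a z)\<^sup>2) = r * r + r * (snd z)\<^sup>2 + (snd z)\<^sup>2 * (snd z)\<^sup>2"
    unfolding sum_UNIV_Plus_option loss_monomial_def by (simp add: power2_eq_square)
  also have "\<dots> \<le> 1 * 1 + 1 * 1 + 1 * 1"
    using r y2 by (intro add_mono mult_mono) auto
  finally show ?thesis by simp
qed

lemma sum_abs_loss_coeff: "(\<Sum>a\<in>UNIV. \<bar>loss_coeff w a\<bar>) = (norm1 w + 1)\<^sup>2"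
  unfolding sum_UNIV_Plus_option loss_coeff_def norm1_def
  by (simp add: abs_mult power2_eq_square sum_product sum_distrib_left algebra_simps)

lemma sum_sq_loss_coeff_le:
  assumes "norm w \<le> 1"
  shows "(\<Sum>a\<in>UNIV. (loss_coeff w a)\<^sup>2) \<le> 6"
proof -
  define r where "r = (\<Sum>j\<in>UNIV. (w $ j)\<^sup>2)"
  have r: "0 \<le> r" "r \<le> 1"
    using assms unfolding r_def by (auto simp: sum_nonneg norm_vec_def L2_set_def)
  have "(\<Sum>j\<in>UNIV. \<Sum>k\<in>UNIV. (w $ j * w $ k)\<^sup>2) = r * r"
    unfolding r_def sum_product by (simp add: power_mult_distrib)
  moreover have "(\<Sum>j\<in>UNIV. (- 2 * w $ j)\<^sup>2) = 4 * r"
    unfolding r_def sum_distrib_left by (simp add: power_mult_distrib)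
  ultimately have "(\<Sum>a\<in>UNIV. (loss_coeff w a)\<^sup>2) = r * r + 4 * r + 1"
    unfolding sum_UNIV_Plus_option loss_coeff_def by simp
  also have "\<dots> \<le> 6" using r by (smt (verit) mult_le_one)
  finally show ?thesis .
qed

lemma abs_sum_loss_coeff_mult_le_norm1:
  assumes w: "norm1 w \<le> 1" and t: "\<And>a. \<bar>D a\<bar> \<le> t"
  shows "\<bar>\<Sum>a\<in>UNIV. loss_coeff w a * D a\<bar> \<le> 4 * t"
proof -
  have "\<bar>\<Sum>a\<in>UNIV. loss_coeff w a * D a\<bar> \<le> (\<Sum>a\<in>UNIV. \<bar>loss_coeff w a\<bar> * t)"
    using t by (intro order_trans[OF sum_abs] sum_mono) (simp add: abs_mult mult_left_mono)
  also have "\<dots> = (norm1 w + 1)\<^sup>2 * t" by (simp add: sum_distrib_right[symmetric] sum_abs_loss_coeff)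
  also have "\<dots> \<le> 2\<^sup>2 * t"
    using w t[of undefined] norm1_nonneg[of w] by (intro mult_right_mono power_mono) auto
  finally show ?thesis by simp
qed

lemma abs_sum_loss_coeff_mult_le_L2:
  assumes "norm w \<le> 1"
  shows "\<bar>\<Sum>a\<in>UNIV. loss_coeff w a * D a\<bar> \<le> sqrt 6 * L2_set D UNIV"
proof -
  have "\<bar>\<Sum>a\<in>UNIV. loss_coeff w a * D a\<bar> \<le> (\<Sum>a\<in>UNIV. \<bar>loss_coeff w a\<bar> * \<bar>D a\<bar>)"
    by (rule order_trans[OF sum_abs]) (simp add: abs_mult)
  also have "\<dots> \<le> L2_set (loss_coeff w) UNIV * L2_set D UNIV" by (rule L2_set_mult_ineq)
  also have "L2_set (loss_coeff w) UNIV \<le> sqrt 6"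
    unfolding L2_set_def using sum_sq_loss_coeff_le[OF assms] by simp
  finally show ?thesis by (simp add: mult_right_mono L2_set_nonneg)
qed

section \<open>Uniform deviation of the empirical risk\<close>

definition clip :: "real \<Rightarrow> real" where
  "clip t = max (-1) (min 1 t)"

definition clip_box :: "(real^'d) \<times> real \<Rightarrow> (real^'d) \<times> real" where
  "clip_box z = ((\<chi> j. clip (fst z $ j)), clip (snd z))"

definition clip_ball :: "(real^'d) \<times> real \<Rightarrow> (real^'d) \<times> real" where
  "clip_ball z = (fst z /\<^sub>R max 1 (norm (fst z)), clip (snd z))"

lemma abs_clip_le: "\<bar>clip t\<bar> \<le> 1"
  unfolding clip_def by auto

lemma clip_eq_self: "\<bar>t\<bar> \<le> 1 \<Longrightarrow> clip t = t"
  unfolding clip_def by auto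

lemma clip_box_measurable[measurable]: "clip_box \<in> borel_measurable borel"
  unfolding clip_box_def[abs_def] clip_def
  by (intro borel_measurable_continuous_onI continuous_intros)

lemma clip_ball_measurable[measurable]: "clip_ball \<in> borel_measurable borel"
  unfolding clip_ball_def[abs_def] clip_def
  by (intro borel_measurable_continuous_onI continuous_intros) auto

lemma abs_loss_monomial_clip_box_le: "\<bar>loss_monomial a (clip_box z)\<bar> \<le> 1"
  by (rule abs_loss_monomial_le) (simp_all add: clip_box_def abs_clip_le)

lemma clip_box_eq_self: "(\<forall>i. \<bar>fst z $ i\<bar> \<le> 1) \<and> \<bar>snd z\<bar> \<le> 1 \<Longrightarrow> clip_box z = z"
  by (cases z) (simp add: clip_box_def clip_eq_self vec_eq_iff)

lemma norm_fst_clip_ball_le: "norm (fst (clip_ball z)) \<le> 1"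
  by (simp add: clip_ball_def divide_le_eq_1 less_max_iff_disj flip: divide_inverse_commute)

lemma abs_loss_monomial_clip_ball_le: "\<bar>loss_monomial a (clip_ball z)\<bar> \<le> 1"
proof -
  have "\<bar>fst (clip_ball z) $ j\<bar> \<le> 1" for j
    using component_le_norm_cart[of "fst (clip_ball z)" j] norm_fst_clip_ball_le[of z] by linarith
  then show ?thesis by (rule abs_loss_monomial_le) (simp add: clip_ball_def abs_clip_le)
qed

lemma sum_sq_loss_monomial_clip_ball_le: "(\<Sum>a\<in>UNIV. (loss_monomial a (clip_ball z))\<^sup>2) \<le> 3"
  by (intro sum_sq_loss_monomial_le norm_fst_clip_ball_le) (simp add: clip_ball_def abs_clip_le)

lemma clip_ball_eq_self:
  assumes "norm (fst z) \<le> 1 \<and> \<bar>snd z\<bar> \<le> 1"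
  shows "clip_ball z = z"
proof -
  have "max 1 (norm (fst z)) = 1" using assms by (simp add: max_absorb1)
  then show ?thesis using assms by (cases z) (simp add: clip_ball_def clip_eq_self)
qed

lemma emp_risk_minus_risk_eq_sample_dev:
  fixes D :: "((real^'d) \<times> real) measure" and c :: "(real^'d) \<times> real \<Rightarrow> (real^'d) \<times> real"
  assumes D: "prob_space D" and sets_D[measurable_cong]: "sets D = sets borel"
    and c[measurable]: "c \<in> borel_measurable borel"
    and c_bounded: "\<And>a z. \<bar>loss_monomial a (c z)\<bar> \<le> 1"
    and c_id: "AE z in D. c z = z" and S: "\<And>i. i < m \<Longrightarrow> c (S i) = S i"
  shows "emp_risk m S w - risk D w
           = (\<Sum>a\<in>UNIV. loss_coeff w a * sample_dev D m (\<lambda>z. loss_monomial a (c z)) S)"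
proof -
  have [measurable]: "fst \<in> borel_measurable (borel :: ((real^'d) \<times> real) measure)"
    "snd \<in> borel_measurable (borel :: ((real^'d) \<times> real) measure)"
    by (intro borel_measurable_continuous_onI continuous_intros)+
  have [measurable]: "(\<lambda>x. w \<bullet> x) \<in> borel_measurable borel"
    by (intro borel_measurable_continuous_onI continuous_intros)
  have "risk D w = (\<integral>z. (w \<bullet> fst (c z) - snd (c z))\<^sup>2 \<partial>D)"
    unfolding risk_def by (rule integral_cong_AE) (use c_id in auto)
  moreover have "emp_risk m S w = (\<Sum>i<m. (w \<bullet> fst (c (S i)) - snd (c (S i)))\<^sup>2) / real m"
    unfolding emp_risk_def using S by simp
  ultimately have "emp_risk m S w - risk D w
      = sample_dev D m (\<lambda>z. (w \<bullet> fst (c z) - snd (c z))\<^sup>2) S"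
    unfolding sample_dev_def by simp
  also have "\<dots> = sample_dev D m (\<lambda>z. \<Sum>a\<in>UNIV. loss_coeff w a * loss_monomial a (c z)) S"
    by (simp only: sq_loss_eq_sum_loss_monomials)
  also have "\<dots> = (\<Sum>a\<in>UNIV. loss_coeff w a * sample_dev D m (\<lambda>z. loss_monomial a (c z)) S)"
    by (rule sample_dev_lincomb) (auto intro: integrable_bounded_prob[OF D _ c_bounded])
  finally show ?thesis .
qed

lemma uniform_deviation_from_event:
  fixes D :: "((real^'d) \<times> real) measure" and W :: "(real^'d) set"
  assumes D: "prob_space D" and sets_D[measurable_cong]: "sets D = sets borel"
    and c[measurable]: "c \<in> borel_measurable borel"
    and c_bounded: "\<And>a z. \<bar>loss_monomial a (c z)\<bar> \<le> 1" and c_id: "AE z in D. c z = z"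
    and B: "B \<in> sets (PiM {..<m} (\<lambda>_. D))" and prob_B: "measure (PiM {..<m} (\<lambda>_. D)) B \<ge> 1 - \<delta>"
    and gap: "\<And>S w. S \<in> B \<Longrightarrow> w \<in> W \<Longrightarrow>
                \<bar>\<Sum>a\<in>UNIV. loss_coeff w a * sample_dev D m (\<lambda>z. loss_monomial a (c z)) S\<bar> \<le> R"
  shows "\<exists>A \<in> sets (PiM {..<m} (\<lambda>_. D)). measure (PiM {..<m} (\<lambda>_. D)) A \<ge> 1 - \<delta> \<and>
           (\<forall>S\<in>A. \<forall>w\<in>W. \<bar>emp_risk m S w - risk D w\<bar> \<le> R)"
proof -
  define P where "P = PiM {..<m} (\<lambda>_. D)"
  interpret P: prob_space P unfolding P_def by (intro prob_space_PiM D)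
  define good where "good = {S \<in> space P. \<forall>i\<in>{..<m}. c (S i) = S i}"
  have good_sets: "good \<in> sets P" unfolding good_def P_def by measurable
  have "AE S in P. \<forall>i\<in>{..<m}. c (S i) = S i"
    unfolding P_def using D c_id
    by (intro eventually_ball_finite ballI AE_PiM_component[where P="\<lambda>z. c z = z"]) auto
  then have "AE S in P. S \<in> good" by (auto simp: good_def elim: eventually_mono)
  then have "P.prob (B \<inter> good) = P.prob B"
    using B good_sets unfolding P_def[symmetric] by (intro measure_eq_AE) auto
  moreover have "\<bar>emp_risk m S w - risk D w\<bar> \<le> R" if "S \<in> B \<inter> good" "w \<in> W" for S w
    using that gap emp_risk_minus_risk_eq_sample_dev[OF D sets_D c c_bounded c_id, of m S w]
    by (auto simp: good_def)
  ultimately show ?thesis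
    using B good_sets prob_B unfolding P_def by (intro bexI[of _ "B \<inter> good"]) auto
qed

lemma lasso_uniform_deviation:
  fixes D :: "((real^'d) \<times> real) measure"
  assumes prob: "prob_space D" and sets_D[measurable_cong]: "sets D = sets borel"
    and bdd: "AE z in D. (\<forall>i. \<bar>fst z $ i\<bar> \<le> 1) \<and> \<bar>snd z\<bar> \<le> 1"
    and m: "m > 0" and \<delta>: "0 < \<delta>" "\<delta> < 1"
  shows "\<exists>A \<in> sets (PiM {..<m} (\<lambda>_. D)). measure (PiM {..<m} (\<lambda>_. D)) A \<ge> 1 - \<delta> \<and>
    (\<forall>S\<in>A. \<forall>w\<in>{w. norm1 w \<le> 1}. \<bar>emp_risk m S w - risk D w\<bar>
        \<le> 4 * sqrt (2 * ln (2 * real CARD(('d \<times> 'd) + 'd option) / \<delta>) / real m))"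
proof -
  define t where "t = sqrt (2 * ln (2 * real CARD(('d \<times> 'd) + 'd option) / \<delta>) / real m)"
  define B where "B = {S \<in> space (PiM {..<m} (\<lambda>_. D)).
    \<forall>a. \<bar>sample_dev D m (\<lambda>z. loss_monomial a (clip_box z)) S\<bar> < t}"
  have "B \<in> sets (PiM {..<m} (\<lambda>_. D))" unfolding B_def by measurable
  moreover have "measure (PiM {..<m} (\<lambda>_. D)) B \<ge> 1 - \<delta>"
    unfolding B_def t_def
    by (rule sample_dev_union_bound[OF prob m \<delta>]) (auto simp: abs_loss_monomial_clip_box_le)
  moreover have "AE z in D. clip_box z = z"
    using bdd by (auto elim: eventually_mono intro: clip_box_eq_self)
  ultimately show ?thesis
    unfolding t_def[symmetric]
  proof (intro uniform_deviation_from_event[OF prob sets_D clip_box_measurable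
        abs_loss_monomial_clip_box_le])
    fix S and w :: "real^'d" assume "S \<in> B" "w \<in> {w. norm1 w \<le> 1}"
    then show "\<bar>\<Sum>a\<in>UNIV. loss_coeff w a * sample_dev D m (\<lambda>z. loss_monomial a (clip_box z)) S\<bar> \<le> 4 * t"
      by (intro abs_sum_loss_coeff_mult_le_norm1) (auto simp: B_def intro: less_imp_le)
  qed
qed

lemma norm_le_if_abs_inner_le:
  fixes x :: "'a::real_inner"
  assumes "\<And>w. norm w \<le> 1 \<Longrightarrow> \<bar>w \<bullet> x\<bar> \<le> c" and "c \<ge> 0"
  shows "norm x \<le> c"
proof (cases "x = 0")
  case False
  then have "\<bar>(x /\<^sub>R norm x) \<bullet> x\<bar> \<le> c" by (intro assms(1)) simp
  then show ?thesis
    using False by (simp add: power2_norm_eq_inner[symmetric] power2_eq_square mult.assoc[symmetric])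
qed (use assms(2) in simp)

lemma ridge_uniform_deviation:
  fixes D :: "((real^'d) \<times> real) measure"
  assumes prob: "prob_space D" and sets_D[measurable_cong]: "sets D = sets borel"
    and bdd: "AE z in D. norm (fst z) \<le> 1 \<and> \<bar>snd z\<bar> \<le> 1"
    and m: "m > 0" and \<delta>: "0 < \<delta>" "\<delta> < 1"
  shows "\<exists>A \<in> sets (PiM {..<m} (\<lambda>_. D)). measure (PiM {..<m} (\<lambda>_. D)) A \<ge> 1 - \<delta> \<and>
    (\<forall>S\<in>A. \<forall>w\<in>{w. norm w \<le> 1}. \<bar>emp_risk m S w - risk D w\<bar>
        \<le> sqrt 6 * (sqrt (3 / real m) + sqrt (6 * ln (1 / \<delta>) / real m)))"
proof -
  define f where "f a z = loss_monomial a (clip_ball z)" for a :: "('d \<times> 'd) + 'd option" and z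
  define t where "t = sqrt (3 / real m) + sqrt (2 * 3 * ln (1 / \<delta>) / real m)"
  define B where "B = {S \<in> space (PiM {..<m} (\<lambda>_. D)). dev_norm D m f S < t}"
  have [measurable]: "f a \<in> borel_measurable D" for a unfolding f_def by measurable
  have "B \<in> sets (PiM {..<m} (\<lambda>_. D))" unfolding B_def by measurable
  moreover have "measure (PiM {..<m} (\<lambda>_. D)) B \<ge> 1 - \<delta>"
    unfolding B_def t_def f_def
    by (rule dev_norm_concentration[OF prob m \<delta>])
       (simp_all add: abs_loss_monomial_clip_ball_le sum_sq_loss_monomial_clip_ball_le)
  moreover have "AE z in D. clip_ball z = z"
    using bdd by (auto elim: eventually_mono intro: clip_ball_eq_self)
  ultimately show ?thesis
  proof (intro uniform_deviation_from_event[OF prob sets_D clip_ball_measurable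
        abs_loss_monomial_clip_ball_le])
    fix S and w :: "real^'d" assume "S \<in> B" "w \<in> {w. norm w \<le> 1}"
    then have "\<bar>\<Sum>a\<in>UNIV. loss_coeff w a * sample_dev D m (f a) S\<bar> \<le> sqrt 6 * dev_norm D m f S"
      and "dev_norm D m f S < t"
      unfolding dev_norm_def B_def by (auto intro: abs_sum_loss_coeff_mult_le_L2)
    then have "\<bar>\<Sum>a\<in>UNIV. loss_coeff w a * sample_dev D m (f a) S\<bar> \<le> sqrt 6 * t"
      by (smt (verit) mult_left_mono real_sqrt_ge_zero)
    then show "\<bar>\<Sum>a\<in>UNIV. loss_coeff w a * sample_dev D m (\<lambda>z. loss_monomial a (clip_ball z)) S\<bar>
        \<le> sqrt 6 * (sqrt (3 / real m) + sqrt (6 * ln (1 / \<delta>) / real m))"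
      unfolding f_def t_def by simp
  qed
qed

lemma lasso_rate_le:
  fixes d m \<delta> :: real
  assumes d: "d \<ge> 1" and m: "m > 0" and \<delta>: "0 < \<delta>" "\<delta> < 1"
  shows "4 * sqrt (2 * ln (2 * (d * d + (d + 1)) / \<delta>) / m)
           \<le> 8 * sqrt (2 * ln (2 * d) / m) + 12 * sqrt (ln (4 / \<delta>) / (2 * m))"
proof -
  define N where "N = d * d + (d + 1)"
  have dd: "1 \<le> d * d" using mult_mono[OF d d] d by simp
  have "2 * N \<le> (2 * d) ^ 4"
  proof -
    have "d * d \<le> d * d * (d * d)" using dd by (simp add: mult_le_cancel_left1)
    moreover have "d \<le> d * d" using d by (simp add: mult_le_cancel_left1)
    ultimately show ?thesis using dd unfolding N_def by (simp add: power4_eq_xxxx algebra_simps)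
  qed
  moreover have "N \<ge> 1" using d dd unfolding N_def by simp
  ultimately have N: "N \<ge> 1" "2 * N \<le> (2 * d) ^ 4" by simp_all
  define a where "a = 2 * ln (2 * N) / m"
  define b where "b = 2 * ln (1 / \<delta>) / m"
  have a: "a \<ge> 0" and b: "b \<ge> 0" unfolding a_def b_def using N m \<delta> by simp_all
  have "2 * ln (2 * N / \<delta>) / m = a + b"
    using N \<delta> unfolding a_def b_def by (simp add: ln_div add_divide_distrib diff_divide_distrib)
  then have "4 * sqrt (2 * ln (2 * N / \<delta>) / m) \<le> 4 * sqrt a + 4 * sqrt b"
    using sqrt_add_le_add_sqrt[OF a b] by simp
  moreover have "4 * sqrt a \<le> 8 * sqrt (2 * ln (2 * d) / m)"
  proof (rule power2_le_imp_le)
    have "ln (2 * N) \<le> ln ((2 * d) ^ 4)" using N by (intro ln_mono) auto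
    also have "\<dots> = 4 * ln (2 * d)" using d by (subst ln_realpow) auto
    finally have "16 * a \<le> 64 * (2 * ln (2 * d) / m)"
      unfolding a_def using m by (simp add: divide_right_mono)
    moreover have "0 \<le> 2 * ln (2 * d) / m" using d m by simp
    ultimately show "(4 * sqrt a)\<^sup>2 \<le> (8 * sqrt (2 * ln (2 * d) / m))\<^sup>2"
      using a by (simp add: power_mult_distrib)
  qed (use d m in simp)
  moreover have "4 * sqrt b \<le> 12 * sqrt (ln (4 / \<delta>) / (2 * m))"
  proof (rule power2_le_imp_le)
    have "ln (1 / \<delta>) \<le> ln (4 / \<delta>)" "0 \<le> ln (1 / \<delta>)"
      using \<delta> by (simp_all add: divide_right_mono)
    have "16 * b = 32 * ln (1 / \<delta>) / m" unfolding b_def by simp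
    also have "\<dots> \<le> 72 * ln (4 / \<delta>) / m"
      using \<open>ln (1 / \<delta>) \<le> ln (4 / \<delta>)\<close> \<open>0 \<le> ln (1 / \<delta>)\<close> m by (intro divide_right_mono) auto
    finally have "16 * b \<le> 144 * (ln (4 / \<delta>) / (2 * m))" by simp
    moreover have "0 \<le> ln (4 / \<delta>) / (2 * m)" using m \<delta> by simp
    ultimately show "(4 * sqrt b)\<^sup>2 \<le> (12 * sqrt (ln (4 / \<delta>) / (2 * m)))\<^sup>2"
      using b by (simp add: power_mult_distrib)
  qed (use m \<delta> in simp)
  ultimately show ?thesis unfolding N_def by linarith
qed

lemma ridge_rate_le:
  fixes d m \<delta> :: real
  assumes d: "d \<ge> 1" and m: "m > 0" and \<delta>: "0 < \<delta>" "\<delta> < 1"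
  shows "sqrt 6 * (sqrt (3 / m) + sqrt (6 * ln (1 / \<delta>) / m))
           \<le> 8 * sqrt (d / m) + 12 * sqrt (ln (4 / \<delta>) / (2 * m))"
proof -
  have "sqrt 6 * sqrt (3 / m) \<le> 8 * sqrt (d / m)"
  proof (rule power2_le_imp_le)
    have "18 / m \<le> 64 * d / m" using d m by (simp add: divide_right_mono)
    then show "(sqrt 6 * sqrt (3 / m))\<^sup>2 \<le> (8 * sqrt (d / m))\<^sup>2"
      using d m by (simp add: power_mult_distrib)
  qed (use d m in simp)
  moreover have "sqrt 6 * sqrt (6 * ln (1 / \<delta>) / m) \<le> 12 * sqrt (ln (4 / \<delta>) / (2 * m))"
  proof (rule power2_le_imp_le)
    have "ln (1 / \<delta>) \<le> ln (4 / \<delta>)" "0 \<le> ln (1 / \<delta>)" using \<delta> by (simp_all add: divide_right_mono)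
    then have "36 * ln (1 / \<delta>) / m \<le> 72 * ln (4 / \<delta>) / m" using m by (intro divide_right_mono) auto
    then show "(sqrt 6 * sqrt (6 * ln (1 / \<delta>) / m))\<^sup>2 \<le> (12 * sqrt (ln (4 / \<delta>) / (2 * m)))\<^sup>2"
      using \<open>0 \<le> ln (1 / \<delta>)\<close> \<delta> m by (simp add: power_mult_distrib)
  qed (use \<delta> m in simp)
  ultimately show ?thesis by (simp add: distrib_left)
qed

lemma pnorm_ball_uniform_deviation:
  fixes D :: "((real^'d) \<times> real) measure"
  assumes p: "p \<in> {1, 2}"
    and prob: "prob_space D"
    and sets_D: "sets D = sets borel"
    and bdd: "AE z in D. (\<forall>i. \<bar>fst z $ i\<bar> \<le> 1) \<and> \<bar>snd z\<bar> \<le> 1"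
    and bddF: "AE z in D. \<forall>w. pnorm p w \<le> 1 \<longrightarrow> \<bar>w \<bullet> fst z\<bar> \<le> 1"
    and m: "m > 0" and \<delta>: "0 < \<delta>" "\<delta> < 1"
  defines "R \<equiv> (if p = 1 then 8 * sqrt (2 * ln (2 * real CARD('d)) / real m)
                 else 8 * sqrt (real CARD('d) / real m))
                + 12 * sqrt (ln (4 / \<delta>) / (2 * real m))"
  shows "\<exists>A \<in> sets (PiM {..<m} (\<lambda>_. D)). measure (PiM {..<m} (\<lambda>_. D)) A \<ge> 1 - \<delta> \<and>
           (\<forall>S\<in>A. \<forall>w\<in>{w. pnorm p w \<le> 1}. \<bar>emp_risk m S w - risk D w\<bar> \<le> R)"
proof -
  have d: "real CARD('d) \<ge> 1" by (simp add: Suc_le_eq)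
  have mono: "\<exists>A \<in> sets (PiM {..<m} (\<lambda>_. D)). measure (PiM {..<m} (\<lambda>_. D)) A \<ge> 1 - \<delta> \<and>
           (\<forall>S\<in>A. \<forall>w\<in>W. \<bar>emp_risk m S w - risk D w\<bar> \<le> R)"
    if "\<exists>A \<in> sets (PiM {..<m} (\<lambda>_. D)). measure (PiM {..<m} (\<lambda>_. D)) A \<ge> 1 - \<delta> \<and>
          (\<forall>S\<in>A. \<forall>w\<in>W. \<bar>emp_risk m S w - risk D w\<bar> \<le> r)" "r \<le> R" for W r
    using that by (meson order_trans)
  show ?thesis
  proof (cases "p = 1")
    case True
    have card: "real CARD(('d \<times> 'd) + 'd option) = real CARD('d) * real CARD('d) + (real CARD('d) + 1)"
      by (simp add: card_UNIV_sum card_UNIV_option)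
    have rate: "4 * sqrt (2 * ln (2 * real CARD(('d \<times> 'd) + 'd option) / \<delta>) / real m) \<le> R"
      unfolding card R_def using True lasso_rate_le[OF d _ \<delta>, of "real m"] m by simp
    have ball: "{w. pnorm p w \<le> 1} = {w. norm1 w \<le> 1}" using True by (simp add: pnorm_def)
    show ?thesis unfolding ball by (rule mono[OF lasso_uniform_deviation[OF prob sets_D bdd m \<delta>] rate])
  next
    case False
    with p have p2: "p = 2" by auto
    have "AE z in D. norm (fst z) \<le> 1 \<and> \<bar>snd z\<bar> \<le> 1"
      using bdd bddF
      by eventually_elim (auto simp: p2 pnorm_def intro: norm_le_if_abs_inner_le)
    note ridge = ridge_uniform_deviation[OF prob sets_D this m \<delta>]
    have rate: "sqrt 6 * (sqrt (3 / real m) + sqrt (6 * ln (1 / \<delta>) / real m)) \<le> R"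
      unfolding R_def using p2 ridge_rate_le[OF d _ \<delta>, of "real m"] m by simp
    have ball: "{w. pnorm p w \<le> 1} = {w. norm w \<le> 1}" using p2 by (simp add: pnorm_def)
    show ?thesis unfolding ball by (rule mono[OF ridge rate])
  qed
qed

theorem mainTheorem6:
  fixes D :: "((real^'d) \<times> real) measure"
    and p m :: nat and \<sigma> \<delta> :: real and wstar :: "real^'d"
  assumes p: "p \<in> {1, 2}"
    and prob: "prob_space D"
    and sets_D: "sets D = sets borel"
    and bdd: "AE z in D. (\<forall>i. \<bar>fst z $ i\<bar> \<le> 1) \<and> \<bar>snd z\<bar> \<le> 1"
    and bddF: "AE z in D. \<forall>w. pnorm p w \<le> 1 \<longrightarrow> \<bar>w \<bullet> fst z\<bar> \<le> 1"
    and wstar: "pnorm p wstar \<le> 1"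
    and noise_mean: "AE z in D. real_cond_exp D (vimage_algebra (space D) fst borel)
                        (\<lambda>z. snd z - wstar \<bullet> fst z) z = 0"
    and noise_var: "AE z in D. real_cond_exp D (vimage_algebra (space D) fst borel)
                        (\<lambda>z. (snd z - wstar \<bullet> fst z)^2) z = \<sigma>^2"
    and m: "m > 0"
    and \<delta>: "0 < \<delta>" "\<delta> < 1"
  shows "\<exists>A \<in> sets (PiM {..<m} (\<lambda>_. D)).
           measure (PiM {..<m} (\<lambda>_. D)) A \<ge> 1 - \<delta> \<and>
           (\<forall>S\<in>A. \<forall>w. is_erm p m S w \<longrightarrow>
              \<bar>\<sigma>^2 - emp_risk m S w\<bar> \<le>
                (if p = 1 then 8 * sqrt (2 * ln (2 * real CARD('d)) / real m)
                 else 8 * sqrt (real CARD('d) / real m))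
                + 12 * sqrt (ln (4 / \<delta>) / (2 * real m)))"
proof -
  define R where "R = (if p = 1 then 8 * sqrt (2 * ln (2 * real CARD('d)) / real m)
                 else 8 * sqrt (real CARD('d) / real m))
                + 12 * sqrt (ln (4 / \<delta>) / (2 * real m))"
  obtain A where A: "A \<in> sets (PiM {..<m} (\<lambda>_. D))" "measure (PiM {..<m} (\<lambda>_. D)) A \<ge> 1 - \<delta>"
    and uniform: "\<forall>S\<in>A. \<forall>w\<in>{w. pnorm p w \<le> 1}. \<bar>emp_risk m S w - risk D w\<bar> \<le> R"
    using pnorm_ball_uniform_deviation[OF p prob sets_D bdd bddF m \<delta>] unfolding R_def by blast
  note risk_eq = risk_eq_excess_risk_add_noise_var[OF prob sets_D bdd noise_mean noise_var]
  show ?thesis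
    unfolding R_def[symmetric]
  proof (intro bexI[OF _ A(1)] conjI A(2) ballI allI impI)
    fix S w assume "S \<in> A" "is_erm p m S w"
    moreover have "risk D wstar = \<sigma>\<^sup>2" "\<sigma>\<^sup>2 \<le> risk D w"
      using risk_eq[of wstar] risk_eq[of w] by simp_all
    ultimately show "\<bar>\<sigma>^2 - emp_risk m S w\<bar> \<le> R"
      using uniform by (intro abs_noise_var_minus_emp_risk_le[OF _ wstar]) auto
  qed
qed

end
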